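(* Let $n\ge1$, $m\ge0$, let $\theta_1,\dots,\theta_n$ be real with $e^{i\theta_1},\dots,e^{i\theta_n}$ distinct, and let $\zeta_1(\boldsymbol\theta),\dots,\zeta_m(\boldsymbol\theta)$ depend smoothly on $\boldsymbol\theta=(\theta_1,\dots,\theta_n)$ and solve the stationary relations $$\sum_{j=1}^n\cot\Big(\frac{\zeta_k-\theta_j}{2}\Big)=\sum_{l\neq k}2\cot\Big(\frac{\zeta_k-\zeta_l}{2}\Big),\qquad k=1,\dots,m,$$ where the points $\xi_k=e^{i\zeta_k}$ are distinct, distinct from the $e^{i\theta_j}$, and the set $\{\xi_1,\dots,\xi_m\}$ is invariant under $\xi\mapsto1/\bar\xi$. Define $$\mathcal{Z}(\boldsymbol\theta)=\prod_{1\le j<k\le n}\sin^2\Big(\frac{\theta_j-\theta_k}{2}\Big)\prod_{1\le s<t\le m}\sin^8\Big(\frac{\zeta_s(\boldsymbol\theta)-\zeta_t(\boldsymbol\theta)}{2}\Big)\prod_{k=1}^n\prod_{l=1}^m\sin^{-4}\Big(\frac{\theta_k-\zeta_l(\boldsymbol\theta)}{2}\Big).$$ Then $\mathcal{Z}$ is strictly positive and rotation invariant. Moreover, with $\mathcal{U}=\log\mathcal{Z}$, the functions $$U_j(\boldsymbol\theta)=\partial_j\mathcal{U}=\sum_{k\neq j}\cot\Big(\frac{\theta_j-\theta_k}{2}\Big)-2\sum_{l=1}^m\cot\Big(\frac{\theta_j-\zeta_l(\boldsymbol\theta)}{2}\Big),\quad j=1,\dots,n,$$ are real-valued and rotation invariant,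 satisfy $\sum_{j=1}^nU_j=0$, and satisfy for each $j$ $$\frac12U_j^2+\sum_{k\neq j}\cot\Big(\frac{\theta_k-\theta_j}{2}\Big)U_k-\sum_{k\neq j}\frac{3}{2\sin^2\big(\frac{\theta_j-\theta_k}{2}\big)}=-\frac{(2m-n)^2}{2}+\frac12 .$$
   Context: Rotation invariance of a function $G(\boldsymbol\theta)$ means $G(\theta_1+c,\dots,\theta_n+c)=G(\boldsymbol\theta)$ for real $c$ (the solution $\boldsymbol\zeta$ shifts accordingly, $\zeta_k(\boldsymbol\theta+c)=\zeta_k(\boldsymbol\theta)+c$). The condition that $\{e^{i\zeta_k}\}$ is invariant under $\xi\mapsto1/\bar\xi$ means the $\zeta_k$ (mod $2\pi$) occur as real numbers or in complex conjugate pairs. *)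

theory Defs
  imports "HOL-Analysis.Analysis"
begin

fun Ck_on :: "nat \<Rightarrow> 'a::euclidean_space set \<Rightarrow> ('a \<Rightarrow> 'b::real_normed_vector) \<Rightarrow> bool" where
  "Ck_on 0 S f = continuous_on S f"
| "Ck_on (Suc k) S f = (f differentiable_on S \<and>
      (\<forall>i\<in>Basis. Ck_on k S (\<lambda>x. frechet_derivative f (at x) i)))"

definition smooth_on :: "'a::euclidean_space set \<Rightarrow> ('a \<Rightarrow> 'b::real_normed_vector) \<Rightarrow> bool" where
  "smooth_on S f = (\<forall>k. Ck_on k S f)"

definition rot :: "real \<Rightarrow> real^'n \<Rightarrow> real^'n" where
  "rot c \<theta> = \<theta> + (\<chi> i. c)"

definition Zfun :: "nat \<Rightarrow> (real^('n::{finite,linorder}) \<Rightarrow> nat \<Rightarrow> complex) \<Rightarrow> real^('n::{finite,linorder}) \<Rightarrow> complex" where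
  "Zfun m \<zeta> \<theta> =
     (\<Prod>p\<in>{(j,k). j < k}. complex_of_real ((sin ((\<theta>$fst p - \<theta>$snd p) / 2))^2))
   * (\<Prod>p\<in>{(s,t). s < t \<and> t < m}. (sin ((\<zeta> \<theta> (fst p) - \<zeta> \<theta> (snd p)) / 2))^8)
   * (\<Prod>k\<in>UNIV. \<Prod>l<m. inverse ((sin ((complex_of_real (\<theta>$k) - \<zeta> \<theta> l) / 2))^4))"

definition Ufun :: "nat \<Rightarrow> (real^('n::finite) \<Rightarrow> nat \<Rightarrow> complex) \<Rightarrow> real^('n::finite) \<Rightarrow> ('n::finite) \<Rightarrow> complex" where
  "Ufun m \<zeta> \<theta> j =
     (\<Sum>k\<in>UNIV-{j}. complex_of_real (cot ((\<theta>$j - \<theta>$k) / 2)))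
     - 2 * (\<Sum>l<m. cot ((complex_of_real (\<theta>$j) - \<zeta> \<theta> l) / 2))"

end

theory Submission
  imports Defs
begin

text \<open>
  With \<open>x = exp (i a)\<close> and \<open>y = exp (i b)\<close> one has \<open>cot ((a - b) / 2) = i (x + y) / (x - y)\<close> and
  \<open>sin\<^sup>2 ((a - b) / 2) = - (x - y)\<^sup>2 / (4 x y)\<close>. The reflection \<open>\<xi> \<mapsto> 1 / cnj \<xi>\<close> fixes the points
  \<open>exp (i \<theta>\<^sub>j)\<close> and permutes the \<open>exp (i \<zeta>\<^sub>l)\<close>; in these coordinates it acts on each such cotangent
  and squared sine as complex conjugation. Hence \<open>U\<^sub>j\<close> is real and \<open>Z\<close> is a product of squares
  of nonzero reals. The same coordinates give
  \<open>cot ((x - y) / 2) cot ((y - z) / 2) + cot ((y - z) / 2) cot ((z - x) / 2) + cot ((z - x) / 2) cot ((x - y) / 2) = 1\<close>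
  for three distinct points of the circle. Summed over all triples of points, and combined with the
  stationary relations, this turns the left-hand side of the quadratic relation into a polynomial
  in \<open>n\<close> and \<open>m\<close>. The stationary relations are used once more for \<open>\<nabla> log Z = U\<close>: differentiating
  \<open>Z\<close> produces terms in the derivatives of the \<open>\<zeta>\<^sub>l\<close>, and these cancel.
\<close>

section \<open>Half-angle functions in exponential coordinates\<close>

lemma exp_ii_half_diff:
  fixes a b :: complex
  shows "exp (\<i> * ((a - b) / 2)) = exp (\<i> * a / 2) / exp (\<i> * b / 2)"
    and "exp (- (\<i> * ((a - b) / 2))) = exp (\<i> * b / 2) / exp (\<i> * a / 2)"
  by (simp_all add: right_diff_distrib diff_divide_distrib exp_diff exp_minus)

lemma exp_ii_half_sq: "exp (\<i> * a) = exp (\<i> * a / 2) ^ 2"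
  by (simp flip: exp_of_nat_mult)

lemma cot_half_diff_exp:
  fixes a b :: complex
  shows "cot ((a - b) / 2) = \<i> * (exp (\<i> * a) + exp (\<i> * b)) / (exp (\<i> * a) - exp (\<i> * b))"
proof -
  define p q where "p = exp (\<i> * a / 2)" and "q = exp (\<i> * b / 2)"
  have "p \<noteq> 0" "q \<noteq> 0"
    by (simp_all add: p_def q_def)
  then show ?thesis
    unfolding cot_def sin_exp_eq cos_exp_eq exp_ii_half_diff exp_ii_half_sq[of a] exp_ii_half_sq[of b]
      p_def[symmetric] q_def[symmetric]
    by (cases "p * p = q * q") (simp_all add: field_simps power2_eq_square)
qed

lemma sin_half_diff_sq_exp:
  fixes a b :: complex
  shows "sin ((a - b) / 2) ^ 2 = - ((exp (\<i> * a) - exp (\<i> * b)) ^ 2 / (4 * exp (\<i> * a) * exp (\<i> * b)))"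
proof -
  define p q where "p = exp (\<i> * a / 2)" and "q = exp (\<i> * b / 2)"
  have "p \<noteq> 0" "q \<noteq> 0"
    by (simp_all add: p_def q_def)
  then show ?thesis
    unfolding sin_exp_eq exp_ii_half_diff exp_ii_half_sq[of a] exp_ii_half_sq[of b]
      p_def[symmetric] q_def[symmetric]
    by (simp add: field_simps power2_eq_square)
qed

lemma sin_half_diff_nonzero:
  fixes a b :: complex
  assumes "exp (\<i> * a) \<noteq> exp (\<i> * b)"
  shows "sin ((a - b) / 2) \<noteq> 0"
  using assms sin_half_diff_sq_exp[of a b] by auto

lemma cot_half_diff_swap: "cot ((x - y) / 2) = - cot ((y - x) / 2)"
  for x y :: "'a::{real_normed_field,banach}"
  by (metis cot_minus minus_diff_eq minus_divide_left)

lemma sin_half_diff_sq_swap: "sin ((x - y) / 2) ^ 2 = sin ((y - x) / 2) ^ 2"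
  for x y :: "'a::{real_normed_field,banach}"
  by (metis minus_diff_eq minus_divide_left sin_minus power2_minus)

lemma inverse_sin_sq: "sin x \<noteq> 0 \<Longrightarrow> inverse (sin x ^ 2) = 1 + cot x ^ 2"
  for x :: "'a::{real_normed_field,banach}"
  by (simp add: cot_def field_simps flip: sin_cos_squared_add)

lemma cot_half_diff_cyclic:
  fixes x y z :: complex
  assumes "exp (\<i> * x) \<noteq> exp (\<i> * y)" "exp (\<i> * y) \<noteq> exp (\<i> * z)" "exp (\<i> * z) \<noteq> exp (\<i> * x)"
  shows "cot ((x - y) / 2) * cot ((y - z) / 2) + cot ((y - z) / 2) * cot ((z - x) / 2)
       + cot ((z - x) / 2) * cot ((x - y) / 2) = 1"
proof -
  define X Y Z where "X = exp (\<i> * x)" and "Y = exp (\<i> * y)" and "Z = exp (\<i> * z)"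
  have "X - Y \<noteq> 0" "Y - Z \<noteq> 0" "Z - X \<noteq> 0"
    using assms by (auto simp: X_def Y_def Z_def)
  then have "(\<i> * (X + Y) / (X - Y)) * (\<i> * (Y + Z) / (Y - Z)) + (\<i> * (Y + Z) / (Y - Z)) * (\<i> * (Z + X) / (Z - X))
      + (\<i> * (Z + X) / (Z - X)) * (\<i> * (X + Y) / (X - Y)) = 1"
    by (simp add: divide_simps) (simp add: algebra_simps)
  then show ?thesis
    unfolding cot_half_diff_exp X_def[symmetric] Y_def[symmetric] Z_def[symmetric] .
qed

lemma cnj_cot_half_diff_reflect:
  fixes a b a' b' :: complex
  assumes "exp (\<i> * a') = 1 / cnj (exp (\<i> * a))" "exp (\<i> * b') = 1 / cnj (exp (\<i> * b))"
  shows "cnj (cot ((a - b) / 2)) = cot ((a' - b') / 2)"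
proof -
  define X Y where "X = exp (\<i> * a')" and "Y = exp (\<i> * b')"
  have "X \<noteq> 0" "Y \<noteq> 0"
    by (simp_all add: X_def Y_def)
  moreover have cnj_exp: "cnj (exp (\<i> * a)) = 1 / X" "cnj (exp (\<i> * b)) = 1 / Y"
    using assms by (simp_all add: X_def Y_def)
  ultimately show ?thesis
    unfolding cot_half_diff_exp X_def[symmetric] Y_def[symmetric] complex_cnj_divide
      complex_cnj_mult complex_cnj_add complex_cnj_diff cnj_exp
    by (cases "X = Y") (simp_all add: field_simps)
qed

lemma cnj_sin_half_diff_sq_reflect:
  fixes a b a' b' :: complex
  assumes "exp (\<i> * a') = 1 / cnj (exp (\<i> * a))" "exp (\<i> * b') = 1 / cnj (exp (\<i> * b))"
  shows "cnj (sin ((a - b) / 2) ^ 2) = sin ((a' - b') / 2) ^ 2"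
proof -
  define X Y where "X = exp (\<i> * a')" and "Y = exp (\<i> * b')"
  have "X \<noteq> 0" "Y \<noteq> 0"
    by (simp_all add: X_def Y_def)
  moreover have cnj_exp: "cnj (exp (\<i> * a)) = 1 / X" "cnj (exp (\<i> * b)) = 1 / Y"
    using assms by (simp_all add: X_def Y_def)
  ultimately show ?thesis
    unfolding sin_half_diff_sq_exp X_def[symmetric] Y_def[symmetric] complex_cnj_divide
      complex_cnj_mult complex_cnj_minus complex_cnj_power complex_cnj_diff cnj_exp
    by (simp add: field_simps) (simp add: algebra_simps power2_eq_square)
qed

lemma exp_ii_of_real_reflect: "exp (\<i> * complex_of_real t) = 1 / cnj (exp (\<i> * complex_of_real t))"
  by (simp add: exp_cnj exp_minus divide_inverse)

section \<open>Sums over ordered pairs\<close>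

lemma (in comm_monoid_set) square_ordered_pairs:
  fixes g :: "'b::linorder \<times> 'b \<Rightarrow> 'a"
  assumes "finite I"
  shows "F g (I \<times> I) = F (\<lambda>(a, b). g (a, b) \<^bold>* g (b, a)) {(a, b) \<in> I \<times> I. a < b} \<^bold>* F (\<lambda>a. g (a, a)) I"
proof -
  define Lt where "Lt = {(a, b) \<in> I \<times> I. a < b}"
  have fin: "finite Lt" "finite (prod.swap ` Lt)" "finite ((\<lambda>a. (a, a)) ` I)"
    using assms by (auto simp: Lt_def intro: finite_subset[of _ "I \<times> I"])
  have "I \<times> I = (Lt \<union> prod.swap ` Lt) \<union> (\<lambda>a. (a, a)) ` I"
    by (auto simp: Lt_def image_iff neq_iff)
  then have "F g (I \<times> I) = F g (Lt \<union> prod.swap ` Lt) \<^bold>* F g ((\<lambda>a. (a, a)) ` I)"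
    using fin by (simp only:) (intro union_disjoint, auto simp: Lt_def)
  also have "F g (Lt \<union> prod.swap ` Lt) = F g Lt \<^bold>* F g (prod.swap ` Lt)"
    using fin by (intro union_disjoint) (auto simp: Lt_def)
  also have "F g (prod.swap ` Lt) = F (\<lambda>(a, b). g (b, a)) Lt"
    by (subst reindex) (auto simp: case_prod_unfold intro: cong)
  also have "F g ((\<lambda>a. (a, a)) ` I) = F (\<lambda>a. g (a, a)) I"
    by (subst reindex) (auto simp: inj_on_def)
  finally show ?thesis
    by (simp add: Lt_def distrib[symmetric] case_prod_unfold)
qed

lemma prod_square_ordered_pairs_sym:
  fixes g :: "'b::linorder \<times> 'b \<Rightarrow> 'a::comm_semiring_1"
  assumes "finite I" and sym: "\<And>a b. g (b, a) = g (a, b)" and diag: "\<And>a. g (a, a) = 1"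
  shows "(\<Prod>p\<in>I \<times> I. g p) = (\<Prod>p\<in>{(a, b) \<in> I \<times> I. a < b}. g p) ^ 2"
proof -
  have "(\<Prod>p\<in>I \<times> I. g p) = (\<Prod>(a, b)\<in>{(a, b) \<in> I \<times> I. a < b}. g (a, b) * g (b, a))"
    using prod.square_ordered_pairs[OF assms(1), of g] by (simp add: diag)
  also have "\<dots> = (\<Prod>p\<in>{(a, b) \<in> I \<times> I. a < b}. g p ^ 2)"
    by (intro prod.cong refl) (auto simp: sym power2_eq_square)
  finally show ?thesis
    by (simp add: prod_power_distrib)
qed

lemma sum_ordered_pairs_antisym:
  fixes C :: "'b::linorder \<Rightarrow> 'b \<Rightarrow> 'a::field_char_0"
  assumes "finite I" and antisym: "\<And>a b. C b a = - C a b"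
  shows "(\<Sum>(a, b)\<in>{(a, b) \<in> I \<times> I. a < b}. C a b * (d a - d b)) = (\<Sum>a\<in>I. d a * (\<Sum>b\<in>I. C a b))"
proof -
  have diag: "C a a = 0" for a
    using antisym[of a a] by simp
  have "(\<Sum>a\<in>I. d a * (\<Sum>b\<in>I. C a b)) = (\<Sum>(a, b)\<in>I \<times> I. C a b * d a)"
    by (simp add: sum.cartesian_product sum_distrib_left mult.commute)
  also have "\<dots> = (\<Sum>(a, b)\<in>{(a, b) \<in> I \<times> I. a < b}. C a b * d a + C b a * d b)"
    using sum.square_ordered_pairs[OF assms(1), of "\<lambda>(a, b). C a b * d a"] by (simp add: diag)
  moreover have "C a b * d a + C b a * d b = C a b * (d a - d b)" for a b
    using antisym[of a b] by (simp add: algebra_simps)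
  ultimately show ?thesis
    by simp
qed

lemma double_sum_antisym_eq_0:
  fixes C :: "'b \<Rightarrow> 'b \<Rightarrow> 'a::field_char_0"
  assumes "\<And>a b. C b a = - C a b"
  shows "(\<Sum>a\<in>I. \<Sum>b\<in>I. C a b) = 0"
proof -
  have "(\<Sum>a\<in>I. \<Sum>b\<in>I. C a b) = (\<Sum>b\<in>I. \<Sum>a\<in>I. - C b a)"
    by (subst sum.swap) (intro sum.cong refl, subst assms, simp)
  then show ?thesis
    by (simp add: sum_negf)
qed

lemma double_sum_antisym_cyclic:
  fixes C :: "'b \<Rightarrow> 'b \<Rightarrow> 'a::field_char_0" and u :: "'b \<Rightarrow> 'a"
  assumes "finite K" and antisym: "\<And>a b. C b a = - C a b"
    and cyclic: "\<And>k i. k \<in> K \<Longrightarrow> i \<in> K \<Longrightarrow> k \<noteq> i \<Longrightarrow> C k i * (u k - u i) = 1 + u k * u i"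
  shows "2 * (\<Sum>k\<in>K. \<Sum>i\<in>K. u k * C k i)
    = of_nat (card K) ^ 2 - of_nat (card K) + (\<Sum>k\<in>K. u k) ^ 2 - (\<Sum>k\<in>K. u k ^ 2)"
proof -
  have diag: "C a a = 0" for a
    using antisym[of a a] by simp
  have "(\<Sum>k\<in>K. \<Sum>i\<in>K. u k * C k i) = (\<Sum>i\<in>K. \<Sum>k\<in>K. - (u k * C i k))"
    by (subst sum.swap) (intro sum.cong refl, subst antisym, simp)
  then have "2 * (\<Sum>k\<in>K. \<Sum>i\<in>K. u k * C k i) = (\<Sum>k\<in>K. \<Sum>i\<in>K. C k i * (u k - u i))"
    by (simp add: sum_negf algebra_simps sum_subtractf)
  also have "\<dots> = (\<Sum>k\<in>K. \<Sum>i\<in>K. 1 + u k * u i - (if i = k then 1 + u k * u k else 0))"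
    by (intro sum.cong refl) (auto simp: cyclic diag)
  also have "\<dots> = of_nat (card K) ^ 2 - of_nat (card K) + (\<Sum>k\<in>K. u k) ^ 2 - (\<Sum>k\<in>K. u k ^ 2)"
    using assms(1) by (simp add: sum_subtractf sum.distrib power2_eq_square sum_distrib_left sum_distrib_right)
      (rule sum.swap)
  finally show ?thesis .
qed

section \<open>Conjugation symmetry\<close>

lemma sum_in_Reals_if_cnj_permutes:
  assumes "bij_betw \<sigma> I I" "\<And>i. i \<in> I \<Longrightarrow> cnj (f i) = f (\<sigma> i)"
  shows "(\<Sum>i\<in>I. f i) \<in> \<real>"
proof -
  have "cnj (\<Sum>i\<in>I. f i) = (\<Sum>i\<in>I. f (\<sigma> i))"
    using assms(2) by simp
  also have "\<dots> = (\<Sum>i\<in>I. f i)"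
    by (rule sum.reindex_bij_betw[OF assms(1)])
  finally show ?thesis
    by (simp add: Reals_cnj_iff)
qed

lemma prod_in_Reals_if_cnj_permutes:
  assumes "bij_betw \<sigma> I I" "\<And>i. i \<in> I \<Longrightarrow> cnj (f i) = f (\<sigma> i)"
  shows "(\<Prod>i\<in>I. f i) \<in> \<real>"
proof -
  have "cnj (\<Prod>i\<in>I. f i) = (\<Prod>i\<in>I. f (\<sigma> i))"
    using assms(2) by simp
  also have "\<dots> = (\<Prod>i\<in>I. f i)"
    by (rule prod.reindex_bij_betw[OF assms(1)])
  finally show ?thesis
    by (simp add: Reals_cnj_iff)
qed

lemma obtain_lifted_permutation:
  assumes "inj_on f I" "inj_on g (f ` I)" "g ` f ` I = f ` I"
  obtains \<sigma> where "bij_betw \<sigma> I I" "\<And>i. i \<in> I \<Longrightarrow> f (\<sigma> i) = g (f i)"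
proof
  have f: "bij_betw f I (f ` I)"
    using assms(1) by (rule inj_on_imp_bij_betw)
  have g: "bij_betw g (f ` I) (f ` I)"
    using assms(2,3) by (simp add: bij_betw_def)
  show "bij_betw (inv_into I f \<circ> g \<circ> f) I I"
    using bij_betw_trans[OF bij_betw_trans[OF f g] bij_betw_inv_into[OF f]] by (simp add: comp_assoc)
  show "f ((inv_into I f \<circ> g \<circ> f) i) = g (f i)" if "i \<in> I" for i
  proof -
    have "g (f i) \<in> f ` I"
      using that assms(3) by blast
    then show ?thesis
      by (simp add: f_inv_into_f)
  qed
qed

lemma square_of_nonzero_real:
  assumes "x \<in> \<real>" "x \<noteq> 0"
  obtains r where "r > 0" "x ^ 2 = complex_of_real r"
proof -
  obtain s where "x = complex_of_real s"
    using assms(1) by (auto elim: Reals_cases)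
  with assms(2) show ?thesis
    by (intro that[of "s ^ 2"]) auto
qed

section \<open>Derivatives\<close>

definition has_log_derivative :: "(real \<Rightarrow> 'a::real_normed_field) \<Rightarrow> 'a \<Rightarrow> real \<Rightarrow> bool"
  where "has_log_derivative f L t \<longleftrightarrow> (f has_vector_derivative f t * L) (at t)"

lemma has_log_derivative_mult:
  assumes "has_log_derivative f K t" "has_log_derivative g L t"
  shows "has_log_derivative (\<lambda>x. f x * g x) (K + L) t"
  using has_vector_derivative_mult[OF assms[unfolded has_log_derivative_def]]
  unfolding has_log_derivative_def by (simp add: algebra_simps)

lemma has_log_derivative_prod:
  assumes "finite I" "\<And>i. i \<in> I \<Longrightarrow> has_log_derivative (f i) (L i) t"
  shows "has_log_derivative (\<lambda>x. \<Prod>i\<in>I. f i x) (\<Sum>i\<in>I. L i) t"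
  using assms
proof (induction I rule: finite_induct)
  case empty
  then show ?case
    by (simp add: has_log_derivative_def)
next
  case (insert i I)
  then show ?case
    by (simp add: has_log_derivative_mult)
qed

lemma has_log_derivative_inverse:
  assumes "has_log_derivative f L t" "f t \<noteq> 0"
  shows "has_log_derivative (\<lambda>x. inverse (f x)) (- L) t"
proof -
  have "((inverse \<circ> f) has_vector_derivative (f t * L) * (- (inverse (f t) ^ Suc (Suc 0)))) (at t)"
    using assms unfolding has_log_derivative_def by (intro field_vector_diff_chain_at DERIV_inverse)
  moreover have "(f t * L) * (- (inverse (f t) ^ Suc (Suc 0))) = inverse (f t) * (- L)"
    using assms(2) by (simp add: field_simps)
  ultimately show ?thesis
    unfolding has_log_derivative_def o_def by (simp only:)
qed

lemma has_log_derivative_sin_half_power: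
  fixes w :: "real \<Rightarrow> 'a::{real_normed_field,banach}"
  assumes "(w has_vector_derivative d) (at t)" "w t = c" "sin (c / 2) \<noteq> 0"
  shows "has_log_derivative (\<lambda>x. sin (w x / 2) ^ p) (of_nat p / 2 * cot (c / 2) * d) t"
proof -
  have "(((\<lambda>y. sin (y / 2) ^ p) \<circ> w) has_vector_derivative
      d * (of_nat p * sin (c / 2) ^ (p - 1) * (cos (c / 2) * (1 / 2)))) (at t)"
    using assms(1,2) by (intro field_vector_diff_chain_at) (auto intro!: derivative_eq_intros)
  moreover have "d * (of_nat p * sin (c / 2) ^ (p - 1) * (cos (c / 2) * (1 / 2)))
      = sin (w t / 2) ^ p * (of_nat p / 2 * cot (c / 2) * d)"
    using assms(2,3) by (cases p) (simp_all add: cot_def field_simps)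
  ultimately show ?thesis
    unfolding has_log_derivative_def o_def by (simp only:)
qed

lemma has_real_derivative_ln_Re:
  fixes Z :: "real \<Rightarrow> complex"
  assumes "has_log_derivative Z U t" "Im (Z t) = 0" "Re (Z t) > 0"
  shows "((\<lambda>x. ln (Re (Z x))) has_real_derivative Re U) (at t)"
proof -
  have "((\<lambda>x. Re (Z x)) has_vector_derivative Re (Z t * U)) (at t)"
    using assms(1) unfolding has_log_derivative_def
    by (rule bounded_linear.has_vector_derivative[OF bounded_linear_Re])
  then have "((\<lambda>x. Re (Z x)) has_real_derivative Re (Z t) * Re U) (at t)"
    using assms(2) by (simp add: has_real_derivative_iff_has_vector_derivative)
  from DERIV_chain2[OF DERIV_ln[OF assms(3)] this]
  have "((\<lambda>x. ln (Re (Z x))) has_real_derivative inverse (Re (Z t)) * (Re (Z t) * Re U)) (at t)" .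
  moreover have "inverse (Re (Z t)) * (Re (Z t) * Re U) = Re U"
    using assms(3) by simp
  ultimately show ?thesis
    by simp
qed

lemma has_vector_derivative_component_line:
  "((\<lambda>t. complex_of_real ((x + t *\<^sub>R v)$k)) has_vector_derivative complex_of_real (v$k)) (at 0)"
  by (auto intro!: derivative_eq_intros has_vector_derivative_of_real)

lemma has_vector_derivative_along_line:
  fixes f :: "'a::real_normed_vector \<Rightarrow> 'b::real_normed_vector"
  assumes "f differentiable (at x)"
  shows "((\<lambda>t. f (x + t *\<^sub>R v)) has_vector_derivative frechet_derivative f (at x) v) (at 0)"
proof -
  have f': "(f has_derivative frechet_derivative f (at x)) (at x)"
    using assms frechet_derivative_works by blast
  have "((f \<circ> (\<lambda>t. x + t *\<^sub>R v)) has_derivative (frechet_derivative f (at x) \<circ> (\<lambda>t. t *\<^sub>R v))) (at 0)"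
    using f' by (intro diff_chain_at) (auto intro!: derivative_eq_intros)
  then show ?thesis
    using linear_scale[OF has_derivative_linear[OF f']]
    by (simp add: has_vector_derivative_def o_def)
qed

lemma smooth_on_imp_differentiable_at:
  assumes "open S" "smooth_on S f" "x \<in> S"
  shows "f differentiable (at x)"
proof -
  have "Ck_on (Suc 0) S f"
    using assms(2) by (simp only: smooth_on_def)
  then show ?thesis
    using assms(1,3) by (simp add: differentiable_on_eq_differentiable_at)
qed

section \<open>Configurations of points on the circle\<close>

lemma rot_nth [simp]: "rot c \<theta> $ k = \<theta> $ k + c"
  by (simp add: rot_def)

lemma Zfun_rot:
  assumes "\<And>k. k < m \<Longrightarrow> \<zeta> (rot c \<theta>) k = \<zeta> \<theta> k + complex_of_real c"
  shows "Zfun m \<zeta> (rot c \<theta>) = Zfun m \<zeta> \<theta>"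
  unfolding Zfun_def by (intro arg_cong2[where f="(*)"] prod.cong refl) (auto simp: assms)

lemma Ufun_rot:
  assumes "\<And>k. k < m \<Longrightarrow> \<zeta> (rot c \<theta>) k = \<zeta> \<theta> k + complex_of_real c"
  shows "Ufun m \<zeta> (rot c \<theta>) j = Ufun m \<zeta> \<theta> j"
  unfolding Ufun_def by (intro arg_cong2[where f="(-)"] arg_cong2[where f="(*)"] sum.cong refl)
    (auto simp: assms)

text \<open>The locales concern the single configuration \<open>\<theta>\<close>, \<open>\<zeta> \<theta>\<close>; the dependence of \<open>\<zeta>\<close> on \<open>\<theta>\<close>
  matters only for the derivative of \<open>Z\<close>.\<close>

locale angle_configuration =
  fixes m :: nat
    and \<theta> :: "real^('n::{finite,linorder})"
    and \<zeta> :: "real^('n::{finite,linorder}) \<Rightarrow> nat \<Rightarrow> complex"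
  assumes distinct_theta:
      "\<And>j k. j \<noteq> k \<Longrightarrow> exp (\<i> * complex_of_real (\<theta>$j)) \<noteq> exp (\<i> * complex_of_real (\<theta>$k))"
    and distinct_zeta: "\<And>k l. k < m \<Longrightarrow> l < m \<Longrightarrow> k \<noteq> l \<Longrightarrow> exp (\<i> * \<zeta> \<theta> k) \<noteq> exp (\<i> * \<zeta> \<theta> l)"
    and distinct_zeta_theta: "\<And>k j. k < m \<Longrightarrow> exp (\<i> * \<zeta> \<theta> k) \<noteq> exp (\<i> * complex_of_real (\<theta>$j))"
begin

definition c\<theta>\<theta> :: "'n \<Rightarrow> 'n \<Rightarrow> complex"
  where "c\<theta>\<theta> j k = complex_of_real (cot ((\<theta>$j - \<theta>$k) / 2))"

definition c\<theta>\<zeta> :: "'n \<Rightarrow> nat \<Rightarrow> complex"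
  where "c\<theta>\<zeta> k l = cot ((complex_of_real (\<theta>$k) - \<zeta> \<theta> l) / 2)"

definition c\<zeta>\<zeta> :: "nat \<Rightarrow> nat \<Rightarrow> complex"
  where "c\<zeta>\<zeta> l t = cot ((\<zeta> \<theta> l - \<zeta> \<theta> t) / 2)"

lemma c\<theta>\<theta>_of_real: "c\<theta>\<theta> j k = cot ((complex_of_real (\<theta>$j) - complex_of_real (\<theta>$k)) / 2)"
  unfolding c\<theta>\<theta>_def cot_of_real by simp

lemma c\<theta>\<theta>_antisym: "c\<theta>\<theta> k j = - c\<theta>\<theta> j k"
  unfolding c\<theta>\<theta>_of_real by (rule cot_half_diff_swap)

lemma c\<zeta>\<zeta>_antisym: "c\<zeta>\<zeta> t l = - c\<zeta>\<zeta> l t"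
  unfolding c\<zeta>\<zeta>_def by (rule cot_half_diff_swap)

lemma c\<theta>\<theta>_diag [simp]: "c\<theta>\<theta> j j = 0"
  by (simp add: c\<theta>\<theta>_def)

lemma c\<zeta>\<zeta>_diag [simp]: "c\<zeta>\<zeta> l l = 0"
  by (simp add: c\<zeta>\<zeta>_def)

lemma cot_zeta_theta: "cot ((\<zeta> \<theta> l - complex_of_real (\<theta>$k)) / 2) = - c\<theta>\<zeta> k l"
  unfolding c\<theta>\<zeta>_def by (rule cot_half_diff_swap)

text \<open>The three-term cotangent identity for the possible types of triples of points, each
  written in the shape required by \<open>double_sum_antisym_cyclic\<close>.\<close>

lemma cyclic_\<theta>\<theta>\<theta>:
  assumes "k \<noteq> j" "i \<noteq> j" "k \<noteq> i"
  shows "c\<theta>\<theta> k i * (c\<theta>\<theta> j k - c\<theta>\<theta> j i) = 1 + c\<theta>\<theta> j k * c\<theta>\<theta> j i"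
proof -
  have "c\<theta>\<theta> j k * c\<theta>\<theta> k i + c\<theta>\<theta> k i * c\<theta>\<theta> i j + c\<theta>\<theta> i j * c\<theta>\<theta> j k = 1"
    unfolding c\<theta>\<theta>_of_real using assms distinct_theta by (intro cot_half_diff_cyclic) auto
  then show ?thesis
    by (simp add: c\<theta>\<theta>_antisym[of i j] algebra_simps)
qed

lemma cyclic_\<theta>\<theta>\<zeta>:
  assumes "k \<noteq> j" "l < m"
  shows "c\<theta>\<theta> j k * (c\<theta>\<zeta> k l - c\<theta>\<zeta> j l) = 1 + c\<theta>\<zeta> k l * c\<theta>\<zeta> j l"
proof -
  have "c\<theta>\<theta> j k * c\<theta>\<zeta> k l + c\<theta>\<zeta> k l * cot ((\<zeta> \<theta> l - complex_of_real (\<theta>$j)) / 2)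
      + cot ((\<zeta> \<theta> l - complex_of_real (\<theta>$j)) / 2) * c\<theta>\<theta> j k = 1"
    unfolding c\<theta>\<theta>_of_real c\<theta>\<zeta>_def using assms distinct_theta distinct_zeta_theta
    by (intro cot_half_diff_cyclic) (auto simp: eq_commute)
  then show ?thesis
    by (simp add: cot_zeta_theta algebra_simps)
qed

lemma cyclic_\<theta>\<zeta>\<zeta>:
  assumes "l < m" "t < m" "l \<noteq> t"
  shows "c\<zeta>\<zeta> l t * (c\<theta>\<zeta> j l - c\<theta>\<zeta> j t) = 1 + c\<theta>\<zeta> j l * c\<theta>\<zeta> j t"
proof -
  have "c\<theta>\<zeta> j l * c\<zeta>\<zeta> l t + c\<zeta>\<zeta> l t * cot ((\<zeta> \<theta> t - complex_of_real (\<theta>$j)) / 2)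
      + cot ((\<zeta> \<theta> t - complex_of_real (\<theta>$j)) / 2) * c\<theta>\<zeta> j l = 1"
    unfolding c\<zeta>\<zeta>_def c\<theta>\<zeta>_def using assms distinct_zeta distinct_zeta_theta
    by (intro cot_half_diff_cyclic) (auto simp: eq_commute)
  then show ?thesis
    by (simp add: cot_zeta_theta algebra_simps)
qed

lemma sin_theta_theta_nonzero:
  assumes "j \<noteq> k"
  shows "sin ((\<theta>$j - \<theta>$k) / 2) \<noteq> 0"
proof -
  have "sin ((complex_of_real (\<theta>$j) - complex_of_real (\<theta>$k)) / 2) \<noteq> 0"
    using distinct_theta[OF assms] by (rule sin_half_diff_nonzero)
  then show ?thesis
    by (metis of_real_0 of_real_diff of_real_divide of_real_numeral sin_of_real)
qed

lemma Ufun_eq: "Ufun m \<zeta> \<theta> k = (\<Sum>i\<in>UNIV. c\<theta>\<theta> k i) - 2 * (\<Sum>l<m. c\<theta>\<zeta> k l)"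
proof -
  have "(\<Sum>i\<in>UNIV - {k}. c\<theta>\<theta> k i) = (\<Sum>i\<in>UNIV. c\<theta>\<theta> k i)"
    by (simp add: sum_diff1 c\<theta>\<theta>_def)
  then show ?thesis
    by (simp add: Ufun_def c\<theta>\<theta>_def c\<theta>\<zeta>_def)
qed

lemma sum_c\<theta>\<theta>_mult_Ufun:
  "(\<Sum>k\<in>UNIV-{j}. c\<theta>\<theta> j k * Ufun m \<zeta> \<theta> k)
   = (\<Sum>k\<in>UNIV-{j}. \<Sum>i\<in>UNIV-{j}. c\<theta>\<theta> j k * c\<theta>\<theta> k i) - (\<Sum>k\<in>UNIV-{j}. c\<theta>\<theta> j k ^ 2)
     - 2 * (\<Sum>k\<in>UNIV-{j}. \<Sum>l<m. c\<theta>\<theta> j k * c\<theta>\<zeta> k l)"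
proof -
  have "c\<theta>\<theta> j k * Ufun m \<zeta> \<theta> k = (\<Sum>i\<in>UNIV-{j}. c\<theta>\<theta> j k * c\<theta>\<theta> k i) - c\<theta>\<theta> j k ^ 2
      - 2 * (\<Sum>l<m. c\<theta>\<theta> j k * c\<theta>\<zeta> k l)" for k
    by (simp add: Ufun_eq sum.remove[of UNIV j] c\<theta>\<theta>_antisym[of k j] sum_distrib_left power2_eq_square
        algebra_simps)
  then show ?thesis
    by (simp add: sum_subtractf sum_distrib_left)
qed

lemma sum_inverse_sin_sq:
  "(\<Sum>k\<in>UNIV-{j}. complex_of_real (3 / (2 * (sin ((\<theta>$j - \<theta>$k) / 2))^2)))
   = 3/2 * (of_nat (card (UNIV - {j})) + (\<Sum>k\<in>UNIV-{j}. c\<theta>\<theta> j k ^ 2))"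
proof -
  have "complex_of_real (3 / (2 * (sin ((\<theta>$j - \<theta>$k) / 2))^2)) = 3/2 * (1 + c\<theta>\<theta> j k ^ 2)"
    if "k \<noteq> j" for k
  proof -
    have "3 / (2 * (sin ((\<theta>$j - \<theta>$k) / 2))^2) = 3/2 * inverse ((sin ((\<theta>$j - \<theta>$k) / 2))^2)"
      by (simp add: field_simps)
    also have "\<dots> = 3/2 * (1 + (cot ((\<theta>$j - \<theta>$k) / 2))^2)"
      using that by (simp add: inverse_sin_sq sin_theta_theta_nonzero)
    finally have "complex_of_real (3 / (2 * (sin ((\<theta>$j - \<theta>$k) / 2))^2))
        = complex_of_real (3/2 * (1 + (cot ((\<theta>$j - \<theta>$k) / 2))^2))"
      by (rule arg_cong)
    then show ?thesis
      by (simp add: c\<theta>\<theta>_def)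
  qed
  then have "(\<Sum>k\<in>UNIV-{j}. complex_of_real (3 / (2 * (sin ((\<theta>$j - \<theta>$k) / 2))^2)))
      = (\<Sum>k\<in>UNIV-{j}. 3/2 * (1 + c\<theta>\<theta> j k ^ 2))"
    by (intro sum.cong refl) simp
  also have "\<dots> = 3/2 * (\<Sum>k\<in>UNIV-{j}. 1 + c\<theta>\<theta> j k ^ 2)"
    by (simp only: sum_distrib_left)
  finally show ?thesis
    by (simp add: sum.distrib)
qed

lemma prod_sin_theta_pos:
  "(\<Prod>p\<in>{(j, k). j < k}. (sin ((\<theta>$fst p - \<theta>$snd p) / 2))^2) > 0"
  by (intro prod_pos) (auto simp: sin_theta_theta_nonzero)

lemma has_log_derivative_sin_sq_theta:
  assumes "j \<noteq> k"
  shows "has_log_derivative (\<lambda>t. complex_of_real ((sin (((\<theta> + t *\<^sub>R v)$j - (\<theta> + t *\<^sub>R v)$k) / 2))^2))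
    (c\<theta>\<theta> j k * complex_of_real (v$j - v$k)) 0"
proof -
  have "has_log_derivative
      (\<lambda>t. sin ((complex_of_real ((\<theta> + t *\<^sub>R v)$j) - complex_of_real ((\<theta> + t *\<^sub>R v)$k)) / 2) ^ 2)
      (of_nat 2 / 2 * cot ((complex_of_real (\<theta>$j) - complex_of_real (\<theta>$k)) / 2)
        * (complex_of_real (v$j) - complex_of_real (v$k))) 0"
    using distinct_theta[OF assms]
    by (intro has_log_derivative_sin_half_power has_vector_derivative_diff has_vector_derivative_component_line)
      (simp_all add: sin_half_diff_nonzero)
  then show ?thesis
    by (simp add: c\<theta>\<theta>_of_real flip: sin_of_real)
qed

lemma has_log_derivative_sin_pow8_zeta:
  assumes "s < m" "t < m" "s \<noteq> t"
    and "(\<lambda>x. \<zeta> x s) differentiable (at \<theta>)" "(\<lambda>x. \<zeta> x t) differentiable (at \<theta>)"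
  shows "has_log_derivative (\<lambda>r. sin ((\<zeta> (\<theta> + r *\<^sub>R v) s - \<zeta> (\<theta> + r *\<^sub>R v) t) / 2) ^ 8)
    (4 * c\<zeta>\<zeta> s t * (frechet_derivative (\<lambda>x. \<zeta> x s) (at \<theta>) v - frechet_derivative (\<lambda>x. \<zeta> x t) (at \<theta>) v)) 0"
proof -
  have "has_log_derivative (\<lambda>r. sin ((\<zeta> (\<theta> + r *\<^sub>R v) s - \<zeta> (\<theta> + r *\<^sub>R v) t) / 2) ^ 8)
      (of_nat 8 / 2 * cot ((\<zeta> \<theta> s - \<zeta> \<theta> t) / 2)
        * (frechet_derivative (\<lambda>x. \<zeta> x s) (at \<theta>) v - frechet_derivative (\<lambda>x. \<zeta> x t) (at \<theta>) v)) 0"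
    using distinct_zeta[OF assms(1-3)] assms(4,5)
    by (intro has_log_derivative_sin_half_power has_vector_derivative_diff has_vector_derivative_along_line)
      (simp_all add: sin_half_diff_nonzero)
  then show ?thesis
    by (simp add: c\<zeta>\<zeta>_def)
qed

lemma has_log_derivative_inverse_sin_pow4_theta_zeta:
  assumes "l < m" "(\<lambda>x. \<zeta> x l) differentiable (at \<theta>)"
  shows "has_log_derivative (\<lambda>t. inverse (sin ((complex_of_real ((\<theta> + t *\<^sub>R v)$k) - \<zeta> (\<theta> + t *\<^sub>R v) l) / 2) ^ 4))
    (- 2 * c\<theta>\<zeta> k l * (complex_of_real (v$k) - frechet_derivative (\<lambda>x. \<zeta> x l) (at \<theta>) v)) 0"
proof -
  have sin: "sin ((complex_of_real (\<theta>$k) - \<zeta> \<theta> l) / 2) \<noteq> 0"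
    using distinct_zeta_theta[OF assms(1)] by (intro sin_half_diff_nonzero) metis
  then have "has_log_derivative (\<lambda>t. sin ((complex_of_real ((\<theta> + t *\<^sub>R v)$k) - \<zeta> (\<theta> + t *\<^sub>R v) l) / 2) ^ 4)
      (of_nat 4 / 2 * cot ((complex_of_real (\<theta>$k) - \<zeta> \<theta> l) / 2)
        * (complex_of_real (v$k) - frechet_derivative (\<lambda>x. \<zeta> x l) (at \<theta>) v)) 0"
    using assms(2)
    by (intro has_log_derivative_sin_half_power has_vector_derivative_diff has_vector_derivative_component_line
        has_vector_derivative_along_line) simp_all
  from has_log_derivative_inverse[OF this] show ?thesis
    using sin by (simp add: c\<theta>\<zeta>_def)
qed

lemma Zfun_log_derivative_expansion:
  fixes v :: "real^('n::{finite,linorder})"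
  assumes "\<And>l. l < m \<Longrightarrow> (\<lambda>x. \<zeta> x l) differentiable (at \<theta>)"
  defines "d l \<equiv> frechet_derivative (\<lambda>x. \<zeta> x l) (at \<theta>) v"
  shows "has_log_derivative (\<lambda>t. Zfun m \<zeta> (\<theta> + t *\<^sub>R v))
     ((\<Sum>p\<in>{(j, k). j < k}. c\<theta>\<theta> (fst p) (snd p) * complex_of_real (v$fst p - v$snd p))
      + (\<Sum>p\<in>{(s, t). s < t \<and> t < m}. 4 * c\<zeta>\<zeta> (fst p) (snd p) * (d (fst p) - d (snd p)))
      + (\<Sum>k\<in>UNIV. \<Sum>l<m. - 2 * c\<theta>\<zeta> k l * (complex_of_real (v$k) - d l))) 0"
  unfolding Zfun_def d_def
  by (intro has_log_derivative_mult has_log_derivative_prod has_log_derivative_sin_sq_theta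
      has_log_derivative_sin_pow8_zeta has_log_derivative_inverse_sin_pow4_theta_zeta assms(1))
    (auto intro: finite_subset[of _ "{..<m} \<times> {..<m}"])

end

section \<open>The stationary relations\<close>

locale stationary_configuration = angle_configuration m \<theta> \<zeta>
  for m and \<theta> :: "real^('n::{finite,linorder})" and \<zeta> +
  assumes stationary: "\<And>k. k < m \<Longrightarrow> (\<Sum>j\<in>UNIV. cot ((\<zeta> \<theta> k - complex_of_real (\<theta>$j)) / 2))
      = (\<Sum>l\<in>{..<m} - {k}. 2 * cot ((\<zeta> \<theta> k - \<zeta> \<theta> l) / 2))"
begin

lemma sum_c\<theta>\<zeta>: "l < m \<Longrightarrow> (\<Sum>k\<in>UNIV. c\<theta>\<zeta> k l) = -2 * (\<Sum>t<m. c\<zeta>\<zeta> l t)"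
  using stationary[of l] by (simp add: cot_zeta_theta sum_negf sum_diff1 flip: c\<zeta>\<zeta>_def sum_distrib_left)
    (metis minus_equation_iff)

lemma sum_c\<theta>\<theta>_mult_c\<theta>\<zeta>:
  "(\<Sum>k\<in>UNIV-{j}. \<Sum>l<m. c\<theta>\<theta> j k * c\<theta>\<zeta> k l)
   = of_nat (card (UNIV - {j})) * of_nat m + (\<Sum>k\<in>UNIV-{j}. c\<theta>\<theta> j k) * (\<Sum>l<m. c\<theta>\<zeta> j l)
     - 2 * (\<Sum>l<m. \<Sum>t<m. c\<theta>\<zeta> j l * c\<zeta>\<zeta> l t) - (\<Sum>l<m. c\<theta>\<zeta> j l ^ 2)"
proof -
  have "(\<Sum>k\<in>UNIV-{j}. \<Sum>l<m. c\<theta>\<theta> j k * c\<theta>\<zeta> k l)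
      = (\<Sum>k\<in>UNIV-{j}. \<Sum>l<m. 1 + c\<theta>\<zeta> j l * c\<theta>\<zeta> k l + c\<theta>\<theta> j k * c\<theta>\<zeta> j l)"
    using cyclic_\<theta>\<theta>\<zeta> by (intro sum.cong refl) (auto simp: algebra_simps)
  also have "\<dots> = of_nat (card (UNIV - {j})) * of_nat m + (\<Sum>k\<in>UNIV-{j}. \<Sum>l<m. c\<theta>\<zeta> j l * c\<theta>\<zeta> k l)
      + (\<Sum>k\<in>UNIV-{j}. c\<theta>\<theta> j k) * (\<Sum>l<m. c\<theta>\<zeta> j l)"
    by (simp add: sum.distrib sum_product)
  also have "(\<Sum>k\<in>UNIV-{j}. \<Sum>l<m. c\<theta>\<zeta> j l * c\<theta>\<zeta> k l) = (\<Sum>l<m. c\<theta>\<zeta> j l * (\<Sum>k\<in>UNIV-{j}. c\<theta>\<zeta> k l))"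
    by (subst sum.swap) (simp add: sum_distrib_left)
  also have "(\<Sum>l<m. c\<theta>\<zeta> j l * (\<Sum>k\<in>UNIV-{j}. c\<theta>\<zeta> k l))
      = (\<Sum>l<m. c\<theta>\<zeta> j l * (-2 * (\<Sum>t<m. c\<zeta>\<zeta> l t) - c\<theta>\<zeta> j l))"
  proof (intro sum.cong refl)
    fix l
    assume "l \<in> {..<m}"
    then have "c\<theta>\<zeta> j l + (\<Sum>k\<in>UNIV-{j}. c\<theta>\<zeta> k l) = -2 * (\<Sum>t<m. c\<zeta>\<zeta> l t)"
      using sum_c\<theta>\<zeta>[of l] by (simp add: sum.remove[of UNIV j])
    then show "c\<theta>\<zeta> j l * (\<Sum>k\<in>UNIV-{j}. c\<theta>\<zeta> k l) = c\<theta>\<zeta> j l * (-2 * (\<Sum>t<m. c\<zeta>\<zeta> l t) - c\<theta>\<zeta> j l)"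
      by (simp add: eq_diff_eq add.commute)
  qed
  also have "\<dots> = - 2 * (\<Sum>l<m. \<Sum>t<m. c\<theta>\<zeta> j l * c\<zeta>\<zeta> l t) - (\<Sum>l<m. c\<theta>\<zeta> j l ^ 2)"
    by (simp add: sum_subtractf sum_distrib_left power2_eq_square algebra_simps)
  finally show ?thesis
    by simp
qed

lemma sum_Ufun_eq_0: "(\<Sum>j\<in>UNIV. Ufun m \<zeta> \<theta> j) = 0"
proof -
  have "(\<Sum>j\<in>UNIV. \<Sum>l<m. c\<theta>\<zeta> j l) = -2 * (\<Sum>l<m. \<Sum>t<m. c\<zeta>\<zeta> l t)"
    by (subst sum.swap) (simp add: sum_c\<theta>\<zeta> sum_distrib_left)
  also have "\<dots> = 0"
    using double_sum_antisym_eq_0[of c\<zeta>\<zeta>, OF c\<zeta>\<zeta>_antisym] by simp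
  finally show ?thesis
    using double_sum_antisym_eq_0[of c\<theta>\<theta>, OF c\<theta>\<theta>_antisym]
    by (simp add: Ufun_eq sum_subtractf flip: sum_distrib_left)
qed

lemma Ufun_quadratic_identity:
  "(1/2) * (Ufun m \<zeta> \<theta> j)^2
     + (\<Sum>k\<in>UNIV-{j}. complex_of_real (cot ((\<theta>$k - \<theta>$j) / 2)) * Ufun m \<zeta> \<theta> k)
     - (\<Sum>k\<in>UNIV-{j}. complex_of_real (3 / (2 * (sin ((\<theta>$j - \<theta>$k) / 2))^2)))
   = complex_of_real (1/2 - (real_of_int (2 * int m - int (card (UNIV :: 'n set))))^2 / 2)"
proof -
  define K N U where "K = UNIV - {j}" and "N = card K" and "U = Ufun m \<zeta> \<theta>"
  define a b q r where "a = (\<Sum>k\<in>K. c\<theta>\<theta> j k)" and "b = (\<Sum>l<m. c\<theta>\<zeta> j l)"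
    and "q = (\<Sum>k\<in>K. c\<theta>\<theta> j k ^ 2)" and "r = (\<Sum>l<m. c\<theta>\<zeta> j l ^ 2)"
  define D E where "D = (\<Sum>k\<in>K. \<Sum>i\<in>K. c\<theta>\<theta> j k * c\<theta>\<theta> k i)"
    and "E = (\<Sum>l<m. \<Sum>t<m. c\<theta>\<zeta> j l * c\<zeta>\<zeta> l t)"
  have D: "D = (of_nat N ^ 2 - of_nat N + a ^ 2 - q) / 2"
  proof -
    have "2 * D = of_nat N ^ 2 - of_nat N + a ^ 2 - q"
      unfolding D_def N_def a_def q_def
      by (rule double_sum_antisym_cyclic[OF _ c\<theta>\<theta>_antisym]) (auto simp: K_def intro: cyclic_\<theta>\<theta>\<theta>)
    then show ?thesis
      by (simp add: eq_divide_eq mult.commute)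
  qed
  have E: "E = (of_nat m ^ 2 - of_nat m + b ^ 2 - r) / 2"
  proof -
    have "2 * E = of_nat (card {..<m}) ^ 2 - of_nat (card {..<m}) + b ^ 2 - r"
      unfolding E_def b_def r_def
      by (rule double_sum_antisym_cyclic[OF _ c\<zeta>\<zeta>_antisym]) (auto intro: cyclic_\<theta>\<zeta>\<zeta>)
    then show ?thesis
      by (simp add: eq_divide_eq mult.commute)
  qed
  have cot_swap: "(\<Sum>k\<in>K. complex_of_real (cot ((\<theta>$k - \<theta>$j) / 2)) * U k) = - (\<Sum>k\<in>K. c\<theta>\<theta> j k * U k)"
    using c\<theta>\<theta>_antisym[of _ j] by (simp add: c\<theta>\<theta>_def sum_negf)
  have Uj: "U j = a - 2 * b"
    by (simp add: U_def Ufun_eq sum.remove[of UNIV j] K_def a_def b_def)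
  have "(1/2) * (U j)^2 + (\<Sum>k\<in>K. complex_of_real (cot ((\<theta>$k - \<theta>$j) / 2)) * U k)
       - (\<Sum>k\<in>K. complex_of_real (3 / (2 * (sin ((\<theta>$j - \<theta>$k) / 2))^2)))
     = (1/2) * (a - 2 * b)^2 - (D - q - 2 * (of_nat N * of_nat m + a * b - 2 * E - r)) - 3/2 * (of_nat N + q)"
    unfolding Uj cot_swap unfolding U_def K_def sum_c\<theta>\<theta>_mult_Ufun sum_c\<theta>\<theta>_mult_c\<theta>\<zeta> sum_inverse_sin_sq
    by (simp add: K_def N_def a_def b_def q_def r_def D_def E_def)
  also have "\<dots> = 1/2 - (2 * of_nat m - (of_nat N + 1))^2 / 2"
    unfolding D E by (simp add: field_simps power2_eq_square)
  also have "of_nat N + 1 = (of_nat CARD('n) :: complex)"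
    by (simp add: N_def K_def card_Diff_singleton)
  finally show ?thesis
    by (simp add: K_def U_def)
qed

text \<open>The variation of the \<open>\<zeta>\<^sub>l\<close> drops out of \<open>\<nabla> log Z\<close>.\<close>

lemma sum_pairs_c\<zeta>\<zeta>_eq_sum_c\<theta>\<zeta>:
  "(\<Sum>p\<in>{(s, t). s < t \<and> t < m}. 4 * c\<zeta>\<zeta> (fst p) (snd p) * (d (fst p) - d (snd p)))
   = - 2 * (\<Sum>k\<in>UNIV. \<Sum>l<m. c\<theta>\<zeta> k l * d l)"
proof -
  define F where "F = (\<Sum>l<m. d l * (\<Sum>t<m. c\<zeta>\<zeta> l t))"
  have "{(a, b) \<in> {..<m} \<times> {..<m}. a < b} = {(s, t). s < t \<and> t < m}"
    by auto
  then have "(\<Sum>p\<in>{(s, t). s < t \<and> t < m}. c\<zeta>\<zeta> (fst p) (snd p) * (d (fst p) - d (snd p))) = F"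
    using sum_ordered_pairs_antisym[where C=c\<zeta>\<zeta> and I="{..<m}" and d=d, OF _ c\<zeta>\<zeta>_antisym]
    by (simp add: F_def case_prod_unfold)
  moreover have "(\<Sum>k\<in>UNIV. \<Sum>l<m. c\<theta>\<zeta> k l * d l) = (\<Sum>l<m. d l * (\<Sum>k\<in>UNIV. c\<theta>\<zeta> k l))"
    by (subst sum.swap) (simp add: sum_distrib_left mult.commute)
  moreover have "\<dots> = -2 * F"
    by (simp add: F_def sum_c\<theta>\<zeta> sum_distrib_left algebra_simps)
  ultimately show ?thesis
    by (simp add: mult.assoc flip: sum_distrib_left)
qed

lemma Zfun_log_derivative:
  assumes "\<And>l. l < m \<Longrightarrow> (\<lambda>x. \<zeta> x l) differentiable (at \<theta>)"
  shows "has_log_derivative (\<lambda>t. Zfun m \<zeta> (\<theta> + t *\<^sub>R v)) (\<Sum>k\<in>UNIV. complex_of_real (v$k) * Ufun m \<zeta> \<theta> k) 0"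
proof -
  define d where "d l = frechet_derivative (\<lambda>x. \<zeta> x l) (at \<theta>) v" for l
  have pairs: "(\<Sum>p\<in>{(j, k). j < k}. c\<theta>\<theta> (fst p) (snd p) * complex_of_real (v$fst p - v$snd p))
      = (\<Sum>k\<in>UNIV. complex_of_real (v$k) * (\<Sum>i\<in>UNIV. c\<theta>\<theta> k i))"
    using sum_ordered_pairs_antisym[where C=c\<theta>\<theta> and I=UNIV and d="\<lambda>k. complex_of_real (v$k)", OF _ c\<theta>\<theta>_antisym]
    by (simp add: case_prod_unfold)
  have "(\<Sum>k\<in>UNIV. \<Sum>l<m. - 2 * c\<theta>\<zeta> k l * (complex_of_real (v$k) - d l))
      = (\<Sum>k\<in>UNIV. \<Sum>l<m. 2 * (c\<theta>\<zeta> k l * d l) - 2 * (complex_of_real (v$k) * c\<theta>\<zeta> k l))"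
    by (intro sum.cong refl) (simp add: algebra_simps)
  also have "\<dots> = 2 * (\<Sum>k\<in>UNIV. \<Sum>l<m. c\<theta>\<zeta> k l * d l)
      - 2 * (\<Sum>k\<in>UNIV. complex_of_real (v$k) * (\<Sum>l<m. c\<theta>\<zeta> k l))"
    by (simp add: sum_subtractf sum_distrib_left)
  finally have cross: "(\<Sum>k\<in>UNIV. \<Sum>l<m. - 2 * c\<theta>\<zeta> k l * (complex_of_real (v$k) - d l))
      = 2 * (\<Sum>k\<in>UNIV. \<Sum>l<m. c\<theta>\<zeta> k l * d l)
        - 2 * (\<Sum>k\<in>UNIV. complex_of_real (v$k) * (\<Sum>l<m. c\<theta>\<zeta> k l))" .
  have U: "(\<Sum>k\<in>UNIV. complex_of_real (v$k) * Ufun m \<zeta> \<theta> k)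
      = (\<Sum>k\<in>UNIV. complex_of_real (v$k) * (\<Sum>i\<in>UNIV. c\<theta>\<theta> k i))
        - 2 * (\<Sum>k\<in>UNIV. complex_of_real (v$k) * (\<Sum>l<m. c\<theta>\<zeta> k l))"
    by (simp add: Ufun_eq right_diff_distrib sum_subtractf sum_distrib_left mult.left_commute)
  show ?thesis
    using Zfun_log_derivative_expansion[OF assms, of v]
    unfolding d_def[symmetric] pairs sum_pairs_c\<zeta>\<zeta>_eq_sum_c\<theta>\<zeta> cross U by simp
qed

lemma Zfun_log_derivative_axis:
  assumes "\<And>l. l < m \<Longrightarrow> (\<lambda>x. \<zeta> x l) differentiable (at \<theta>)"
  shows "has_log_derivative (\<lambda>t. Zfun m \<zeta> (\<theta> + t *\<^sub>R axis j 1)) (Ufun m \<zeta> \<theta> j) 0"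
proof -
  have "(\<Sum>k\<in>UNIV. complex_of_real (axis j 1 $ k) * Ufun m \<zeta> \<theta> k) = (\<Sum>k\<in>UNIV. if k = j then Ufun m \<zeta> \<theta> k else 0)"
    by (intro sum.cong refl) (simp add: axis_def)
  then show ?thesis
    using Zfun_log_derivative[OF assms, of "axis j 1"] by simp
qed

end

section \<open>Reflection symmetry\<close>

locale reflection_symmetric_configuration = angle_configuration m \<theta> \<zeta>
  for m and \<theta> :: "real^('n::{finite,linorder})" and \<zeta> +
  assumes reflect: "(\<lambda>\<xi>. 1 / cnj \<xi>) ` {exp (\<i> * \<zeta> \<theta> k) | k. k < m} = {exp (\<i> * \<zeta> \<theta> k) | k. k < m}"
begin

lemma obtain_reflection_permutation:
  obtains \<sigma> where "bij_betw \<sigma> {..<m} {..<m}"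
    "\<And>k. k < m \<Longrightarrow> exp (\<i> * \<zeta> \<theta> (\<sigma> k)) = 1 / cnj (exp (\<i> * \<zeta> \<theta> k))"
proof (rule obtain_lifted_permutation[of "\<lambda>k. exp (\<i> * \<zeta> \<theta> k)" "{..<m}" "\<lambda>\<xi>. 1 / cnj \<xi>"])
  show "inj_on (\<lambda>k. exp (\<i> * \<zeta> \<theta> k)) {..<m}"
    using distinct_zeta by (auto simp: inj_on_def)
  show "inj_on (\<lambda>\<xi>. 1 / cnj \<xi>) ((\<lambda>k. exp (\<i> * \<zeta> \<theta> k)) ` {..<m})"
    by (rule inj_onI) simp
  have "{exp (\<i> * \<zeta> \<theta> k) | k. k < m} = (\<lambda>k. exp (\<i> * \<zeta> \<theta> k)) ` {..<m}"
    by auto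
  with reflect show "(\<lambda>\<xi>. 1 / cnj \<xi>) ` (\<lambda>k. exp (\<i> * \<zeta> \<theta> k)) ` {..<m} = (\<lambda>k. exp (\<i> * \<zeta> \<theta> k)) ` {..<m}"
    by simp
qed auto

lemma Ufun_real: "Im (Ufun m \<zeta> \<theta> j) = 0"
proof -
  obtain \<sigma> where \<sigma>: "bij_betw \<sigma> {..<m} {..<m}"
    and reflect_\<sigma>: "\<And>k. k < m \<Longrightarrow> exp (\<i> * \<zeta> \<theta> (\<sigma> k)) = 1 / cnj (exp (\<i> * \<zeta> \<theta> k))"
    using obtain_reflection_permutation by blast
  have "(\<Sum>l<m. c\<theta>\<zeta> j l) \<in> \<real>"
    using \<sigma> by (rule sum_in_Reals_if_cnj_permutes)
      (simp add: c\<theta>\<zeta>_def cnj_cot_half_diff_reflect[OF exp_ii_of_real_reflect reflect_\<sigma>])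
  then show ?thesis
    by (simp add: Ufun_def c\<theta>\<zeta>_def complex_is_Real_iff)
qed

text \<open>Putting \<open>1\<close> on the diagonal turns the product over \<open>s < t\<close> into one over all ordered pairs,
  which the reflection permutation visibly preserves.\<close>

lemma prod_sin_sq_zeta_in_Reals:
  "(\<Prod>p\<in>{..<m} \<times> {..<m}. if fst p = snd p then 1 else sin ((\<zeta> \<theta> (fst p) - \<zeta> \<theta> (snd p)) / 2) ^ 2) \<in> \<real>"
proof -
  obtain \<sigma> where \<sigma>: "bij_betw \<sigma> {..<m} {..<m}"
    and reflect_\<sigma>: "\<And>k. k < m \<Longrightarrow> exp (\<i> * \<zeta> \<theta> (\<sigma> k)) = 1 / cnj (exp (\<i> * \<zeta> \<theta> k))"
    using obtain_reflection_permutation by blast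
  show ?thesis
  proof (rule prod_in_Reals_if_cnj_permutes[OF bij_betw_map_prod[OF \<sigma> \<sigma>]])
    fix p
    assume "p \<in> {..<m} \<times> {..<m}"
    then obtain s t where p: "p = (s, t)" "s < m" "t < m"
      by auto
    show "cnj (if fst p = snd p then 1 else sin ((\<zeta> \<theta> (fst p) - \<zeta> \<theta> (snd p)) / 2) ^ 2)
      = (if fst (map_prod \<sigma> \<sigma> p) = snd (map_prod \<sigma> \<sigma> p) then 1
         else sin ((\<zeta> \<theta> (fst (map_prod \<sigma> \<sigma> p)) - \<zeta> \<theta> (snd (map_prod \<sigma> \<sigma> p))) / 2) ^ 2)"
    proof (cases "s = t")
      case True
      then show ?thesis
        by (simp add: p)
    next
      case False
      then have "\<sigma> s \<noteq> \<sigma> t"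
        using \<sigma> p by (auto simp: bij_betw_def inj_on_def)
      moreover have "cnj (sin ((\<zeta> \<theta> s - \<zeta> \<theta> t) / 2) ^ 2) = sin ((\<zeta> \<theta> (\<sigma> s) - \<zeta> \<theta> (\<sigma> t)) / 2) ^ 2"
        using p by (intro cnj_sin_half_diff_sq_reflect reflect_\<sigma>)
      ultimately show ?thesis
        using False by (simp add: p)
    qed
  qed
qed

lemma prod_sin_zeta_pos:
  obtains r where "r > 0"
    "(\<Prod>p\<in>{(s, t). s < t \<and> t < m}. (sin ((\<zeta> \<theta> (fst p) - \<zeta> \<theta> (snd p)) / 2))^8) = complex_of_real r"
proof -
  define g where "g p = (if fst p = snd p then 1 else sin ((\<zeta> \<theta> (fst p) - \<zeta> \<theta> (snd p)) / 2) ^ 2)"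
    for p :: "nat \<times> nat"
  define Q where "Q = (\<Prod>p\<in>{..<m} \<times> {..<m}. g p)"
  have "{(a, b) \<in> {..<m} \<times> {..<m}. a < b} = {(s, t). s < t \<and> t < m}"
    by auto
  moreover have "g (b, a) = g (a, b)" for a b
    by (simp add: g_def sin_half_diff_sq_swap[of "\<zeta> \<theta> b" "\<zeta> \<theta> a"])
  ultimately have "Q = (\<Prod>p\<in>{(s, t). s < t \<and> t < m}. g p) ^ 2"
    unfolding Q_def using prod_square_ordered_pairs_sym[of "{..<m}" g] by (simp add: g_def)
  also have "(\<Prod>p\<in>{(s, t). s < t \<and> t < m}. g p) = (\<Prod>p\<in>{(s, t). s < t \<and> t < m}. sin ((\<zeta> \<theta> (fst p) - \<zeta> \<theta> (snd p)) / 2) ^ 2)"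
    by (intro prod.cong refl) (auto simp: g_def)
  finally have square: "(\<Prod>p\<in>{(s, t). s < t \<and> t < m}. (sin ((\<zeta> \<theta> (fst p) - \<zeta> \<theta> (snd p)) / 2))^8) = Q ^ 2"
    by (simp add: prod_power_distrib flip: power_mult)
  have "Q \<in> \<real>"
    using prod_sin_sq_zeta_in_Reals by (simp add: Q_def g_def)
  moreover have "Q \<noteq> 0"
  proof -
    have "g p \<noteq> 0" if "p \<in> {..<m} \<times> {..<m}" for p
      using that distinct_zeta[of "fst p" "snd p"] by (auto simp: g_def dest: sin_half_diff_nonzero)
    then show ?thesis
      by (simp add: Q_def)
  qed
  ultimately obtain r where "r > 0" "Q ^ 2 = complex_of_real r"
    by (rule square_of_nonzero_real)
  then show ?thesis
    by (intro that[of r]) (simp_all add: square)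
qed

lemma prod_inverse_sin_theta_zeta_pos:
  obtains r where "r > 0"
    "(\<Prod>l<m. inverse ((sin ((complex_of_real (\<theta>$k) - \<zeta> \<theta> l) / 2))^4)) = complex_of_real r"
proof -
  obtain \<sigma> where \<sigma>: "bij_betw \<sigma> {..<m} {..<m}"
    and reflect_\<sigma>: "\<And>k. k < m \<Longrightarrow> exp (\<i> * \<zeta> \<theta> (\<sigma> k)) = 1 / cnj (exp (\<i> * \<zeta> \<theta> k))"
    using obtain_reflection_permutation by blast
  define R where "R = (\<Prod>l<m. inverse (sin ((complex_of_real (\<theta>$k) - \<zeta> \<theta> l) / 2) ^ 2))"
  have square: "(\<Prod>l<m. inverse ((sin ((complex_of_real (\<theta>$k) - \<zeta> \<theta> l) / 2))^4)) = R ^ 2"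
    by (simp add: R_def prod_power_distrib power_inverse flip: power_mult)
  have "R \<in> \<real>"
    unfolding R_def using \<sigma>
  proof (rule prod_in_Reals_if_cnj_permutes)
    fix l
    assume "l \<in> {..<m}"
    then have "cnj (sin ((complex_of_real (\<theta>$k) - \<zeta> \<theta> l) / 2) ^ 2) = sin ((complex_of_real (\<theta>$k) - \<zeta> \<theta> (\<sigma> l)) / 2) ^ 2"
      by (intro cnj_sin_half_diff_sq_reflect exp_ii_of_real_reflect reflect_\<sigma>) simp
    then show "cnj (inverse (sin ((complex_of_real (\<theta>$k) - \<zeta> \<theta> l) / 2) ^ 2))
        = inverse (sin ((complex_of_real (\<theta>$k) - \<zeta> \<theta> (\<sigma> l)) / 2) ^ 2)"
      by (simp only: complex_cnj_inverse)
  qed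
  moreover have "R \<noteq> 0"
  proof -
    have "sin ((complex_of_real (\<theta>$k) - \<zeta> \<theta> l) / 2) \<noteq> 0" if "l < m" for l
      using distinct_zeta_theta[OF that, of k] by (intro sin_half_diff_nonzero) (simp add: eq_commute)
    then show ?thesis
      by (simp add: R_def)
  qed
  ultimately obtain r where "r > 0" "R ^ 2 = complex_of_real r"
    by (rule square_of_nonzero_real)
  then show ?thesis
    by (intro that[of r]) (simp_all add: square)
qed

lemma Zfun_real_pos: "Im (Zfun m \<zeta> \<theta>) = 0 \<and> Re (Zfun m \<zeta> \<theta>) > 0"
proof -
  obtain q where q: "q > 0"
    "(\<Prod>p\<in>{(s, t). s < t \<and> t < m}. (sin ((\<zeta> \<theta> (fst p) - \<zeta> \<theta> (snd p)) / 2))^8) = complex_of_real q"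
    by (rule prod_sin_zeta_pos)
  have "\<exists>r. r > 0 \<and>
      (\<Prod>l<m. inverse ((sin ((complex_of_real (\<theta>$k) - \<zeta> \<theta> l) / 2))^4)) = complex_of_real r" for k
    by (rule prod_inverse_sin_theta_zeta_pos[of k]) blast
  then obtain r where r: "\<And>k. r k > 0"
    "\<And>k. (\<Prod>l<m. inverse ((sin ((complex_of_real (\<theta>$k) - \<zeta> \<theta> l) / 2))^4)) = complex_of_real (r k)"
    by metis
  define z where "z = (\<Prod>p\<in>{(j, k). j < k}. (sin ((\<theta>$fst p - \<theta>$snd p) / 2))^2) * q * (\<Prod>k\<in>UNIV. r k)"
  have "Zfun m \<zeta> \<theta> = complex_of_real z"
    unfolding Zfun_def q(2) r(2) z_def by simp
  moreover have "z > 0"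
    unfolding z_def using prod_sin_theta_pos q r by (simp add: prod_pos)
  ultimately show ?thesis
    by simp
qed

end

theorem mainTheorem3:
  fixes S :: "(real^('n::{finite,linorder})) set"
    and m :: nat
    and \<zeta> :: "real^('n::{finite,linorder}) \<Rightarrow> nat \<Rightarrow> complex"
  assumes S_open: "open S"
    and S_rot: "\<And>\<theta> c. \<theta> \<in> S \<Longrightarrow> rot c \<theta> \<in> S"
    and smooth: "\<And>k. k < m \<Longrightarrow> smooth_on S (\<lambda>\<theta>. \<zeta> \<theta> k)"
    and shift: "\<And>\<theta> c k. \<theta> \<in> S \<Longrightarrow> k < m \<Longrightarrow> \<zeta> (rot c \<theta>) k = \<zeta> \<theta> k + complex_of_real c"
    and dist_theta: "\<And>\<theta> j k. \<theta> \<in> S \<Longrightarrow> j \<noteq> k \<Longrightarrow>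
          exp (\<i> * complex_of_real (\<theta>$j)) \<noteq> exp (\<i> * complex_of_real (\<theta>$k))"
    and dist_xi: "\<And>\<theta> k l. \<theta> \<in> S \<Longrightarrow> k < m \<Longrightarrow> l < m \<Longrightarrow> k \<noteq> l \<Longrightarrow>
          exp (\<i> * \<zeta> \<theta> k) \<noteq> exp (\<i> * \<zeta> \<theta> l)"
    and dist_xi_theta: "\<And>\<theta> k j. \<theta> \<in> S \<Longrightarrow> k < m \<Longrightarrow>
          exp (\<i> * \<zeta> \<theta> k) \<noteq> exp (\<i> * complex_of_real (\<theta>$j))"
    and stationary: "\<And>\<theta> k. \<theta> \<in> S \<Longrightarrow> k < m \<Longrightarrow>
          (\<Sum>j\<in>UNIV. cot ((\<zeta> \<theta> k - complex_of_real (\<theta>$j)) / 2))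
          = (\<Sum>l\<in>{..<m}-{k}. 2 * cot ((\<zeta> \<theta> k - \<zeta> \<theta> l) / 2))"
    and reflect: "\<And>\<theta>. \<theta> \<in> S \<Longrightarrow>
          (\<lambda>\<xi>. 1 / cnj \<xi>) ` {exp (\<i> * \<zeta> \<theta> k) | k. k < m} = {exp (\<i> * \<zeta> \<theta> k) | k. k < m}"
    and \<theta>S: "\<theta> \<in> S"
  shows "Im (Zfun m \<zeta> \<theta>) = 0 \<and> Re (Zfun m \<zeta> \<theta>) > 0
    \<and> (\<forall>c. Zfun m \<zeta> (rot c \<theta>) = Zfun m \<zeta> \<theta>)
    \<and> (\<forall>j. ((\<lambda>t. ln (Re (Zfun m \<zeta> (\<theta> + t *\<^sub>R axis j 1))))
              has_real_derivative Re (Ufun m \<zeta> \<theta> j)) (at 0))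
    \<and> (\<forall>j. Im (Ufun m \<zeta> \<theta> j) = 0)
    \<and> (\<forall>j c. Ufun m \<zeta> (rot c \<theta>) j = Ufun m \<zeta> \<theta> j)
    \<and> (\<Sum>j\<in>UNIV. Ufun m \<zeta> \<theta> j) = 0
    \<and> (\<forall>j. (1/2) * (Ufun m \<zeta> \<theta> j)^2
           + (\<Sum>k\<in>UNIV-{j}. complex_of_real (cot ((\<theta>$k - \<theta>$j) / 2)) * Ufun m \<zeta> \<theta> k)
           - (\<Sum>k\<in>UNIV-{j}. complex_of_real (3 / (2 * (sin ((\<theta>$j - \<theta>$k) / 2))^2)))
         = complex_of_real (1/2 - (real_of_int (2 * int m - int (card (UNIV :: 'n set))))^2 / 2))"
proof -
  interpret stationary_configuration m \<theta> \<zeta>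
    by unfold_locales (simp_all add: \<theta>S dist_theta dist_xi dist_xi_theta stationary)
  interpret reflection_symmetric_configuration m \<theta> \<zeta>
    by unfold_locales (rule reflect[OF \<theta>S])
  have "(\<lambda>x. \<zeta> x l) differentiable (at \<theta>)" if "l < m" for l
    using S_open smooth[OF that] \<theta>S by (rule smooth_on_imp_differentiable_at)
  then have "((\<lambda>t. ln (Re (Zfun m \<zeta> (\<theta> + t *\<^sub>R axis j 1)))) has_real_derivative Re (Ufun m \<zeta> \<theta> j)) (at 0)"
    for j
    using Zfun_real_pos by (intro has_real_derivative_ln_Re Zfun_log_derivative_axis) simp_all
  moreover have "Zfun m \<zeta> (rot c \<theta>) = Zfun m \<zeta> \<theta>" "Ufun m \<zeta> (rot c \<theta>) j = Ufun m \<zeta> \<theta> j" for c j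
    using shift[OF \<theta>S] by (simp_all add: Zfun_rot Ufun_rot)
  ultimately show ?thesis
    using Zfun_real_pos Ufun_real sum_Ufun_eq_0 Ufun_quadratic_identity by blast
qed

end
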